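(* Let $X$ be any space and let $A$ be a homotopy cut-set for paths $\alpha,\beta:[0,1]\to X$ such that $\alpha(A)\subseteq X\setminus\mathbf{aw}(X)$. Then $\alpha\simeq\beta$.
   Context: $\simeq$ is path-homotopy. A loop is trivial if path-homotopic to a constant loop. A sequence of loops $\alpha_n$ based at $x$ is a null-sequence if every neighborhood of $x$ contains $\alpha_n([0,1])$ for all but finitely many $n$. $\mathbf{aw}(X)=\{x\in X\mid \text{there is a null-sequence of non-trivial loops based at }x\}$. For paths $\alpha,\beta:[s,t]\to X$, a set $A\subseteq[s,t]$ is a homotopy cut-set for $\alpha,\beta$ if $A$ is closed, nowhere dense, contains $\{s,t\}$, $\alpha|_A=\beta|_A$, and $\alpha|_{[a,b]}\simeq\beta|_{[a,b]}$ for every component $(a,b)$ of $[s,t]\setminus A$. *)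

theory Defs
  imports "HOL-Analysis.Analysis"
begin

definition path_homotopic_on :: "'a topology \<Rightarrow> real \<Rightarrow> real \<Rightarrow> (real \<Rightarrow> 'a) \<Rightarrow> (real \<Rightarrow> 'a) \<Rightarrow> bool" where
  "path_homotopic_on X a b p q \<longleftrightarrow>
     homotopic_with (\<lambda>h. h a = p a \<and> h b = p b) (subtopology euclideanreal {a..b}) X p q"

definition trivial_loop :: "'a topology \<Rightarrow> 'a \<Rightarrow> (real \<Rightarrow> 'a) \<Rightarrow> bool" where
  "trivial_loop X x \<alpha> \<longleftrightarrow> path_homotopic_on X 0 1 \<alpha> (\<lambda>_. x)"

definition aw :: "'a topology \<Rightarrow> 'a set" where
  "aw X = {x \<in> topspace X. \<exists>\<alpha> :: nat \<Rightarrow> real \<Rightarrow> 'a.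
      (\<forall>n. pathin X (\<alpha> n) \<and> \<alpha> n 0 = x \<and> \<alpha> n 1 = x \<and> \<not> trivial_loop X x (\<alpha> n)) \<and>
      (\<forall>U. openin X U \<and> x \<in> U \<longrightarrow> (\<forall>\<^sub>F n in sequentially. \<alpha> n ` {0..1} \<subseteq> U))}"

definition homotopy_cut_set ::
  "'a topology \<Rightarrow> real \<Rightarrow> real \<Rightarrow> (real \<Rightarrow> 'a) \<Rightarrow> (real \<Rightarrow> 'a) \<Rightarrow> real set \<Rightarrow> bool" where
  "homotopy_cut_set X s t \<alpha> \<beta> A \<longleftrightarrow>
     A \<subseteq> {s..t} \<and> closed A \<and> interior (closure A) = {} \<and> s \<in> A \<and> t \<in> A \<and>
     (\<forall>x\<in>A. \<alpha> x = \<beta> x) \<and>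
     (\<forall>a b. a < b \<and> {a<..<b} \<in> components ({s..t} - A) \<longrightarrow> path_homotopic_on X a b \<alpha> \<beta>)"

end

theory Submission
  imports Defs
begin

text \<open>Near a point \<open>t \<in> A\<close> whose image is not in \<open>aw X\<close>, the loops that run along \<open>\<alpha>\<close> from
  \<open>t\<close> to a nearby \<open>s \<in> A\<close> and back along \<open>\<beta>\<close> form a null-sequence as \<open>s \<rightarrow> t\<close>, so all but
  finitely many of them are trivial; hence \<open>\<alpha>\<close> and \<open>\<beta>\<close> are path-homotopic on every short
  interval between \<open>t\<close> and a point of \<open>A\<close>. On the complementary intervals of \<open>A\<close> they are
  path-homotopic by hypothesis. Gluing these homotopies, a supremum argument over the
  closed set \<open>A\<close> pushes the homotopy from \<open>0\<close> all the way to \<open>1\<close>.\<close>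

lemma path_homotopic_on_iff:
  assumes "a \<le> b"
  shows "path_homotopic_on X a b p q \<longleftrightarrow>
    (\<exists>h. continuous_map (top_of_set ({0..1::real} \<times> {a..b})) X h \<and>
      (\<forall>x\<in>{a..b}. h (0, x) = p x) \<and> (\<forall>x\<in>{a..b}. h (1, x) = q x) \<and>
      (\<forall>v\<in>{0..1}. h (v, a) = p a \<and> h (v, b) = p b))"
  unfolding path_homotopic_on_def using assms by (subst homotopic_with) force+

lemma path_homotopic_on_point:
  assumes "p a \<in> topspace X" and "q a = p a"
  shows "path_homotopic_on X a a p q"
  unfolding path_homotopic_on_def
proof (rule homotopic_with_equal)
  have "continuous_map (top_of_set {a..a}) X (\<lambda>_. p a)"
    using assms(1) by simp
  then show "continuous_map (top_of_set {a..a}) X p"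
    by (rule continuous_map_eq) simp
qed (use assms(2) in auto)

lemma path_homotopic_on_linepath:
  fixes p q :: "real \<Rightarrow> 'a"
  assumes hom: "path_homotopic_on X 0 1 (p \<circ> linepath t s) (q \<circ> linepath t s)" and "t \<noteq> s"
  shows "path_homotopic_on X (min t s) (max t s) p q"
proof -
  define l where "l r = (r - t) / (s - t)" for r
  have lin: "linepath t s (l r) = r" for r
  proof -
    have "linepath t s (l r) = t + l r * (s - t)"
      by (simp add: linepath_def algebra_simps)
    then show ?thesis
      using \<open>t \<noteq> s\<close> by (simp add: l_def)
  qed
  have l_01: "l r \<in> {0..1}" if "r \<in> {min t s..max t s}" for r
    using that \<open>t \<noteq> s\<close> unfolding l_def
    by (cases "t < s") (auto simp: zero_le_divide_iff divide_le_eq_1)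
  have l_ends: "l (min t s) \<in> {0, 1}" "l (max t s) \<in> {0, 1}"
    using \<open>t \<noteq> s\<close> by (auto simp: l_def min_def max_def)
  have "continuous_map (top_of_set {min t s..max t s}) (top_of_set {0..1}) l"
    using l_01 \<open>t \<noteq> s\<close> unfolding l_def
    by (auto simp: continuous_map_in_subtopology intro!: continuous_intros)
  with hom have "homotopic_with (\<lambda>h. h (min t s) = p (min t s) \<and> h (max t s) = p (max t s))
      (top_of_set {min t s..max t s}) X (p \<circ> linepath t s \<circ> l) (q \<circ> linepath t s \<circ> l)"
    unfolding path_homotopic_on_def
  proof (rule homotopic_with_compose_continuous_map_right)
    fix j :: "real \<Rightarrow> 'a" assume "j 0 = (p \<circ> linepath t s) 0 \<and> j 1 = (p \<circ> linepath t s) 1"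
    then have "j (l r) = p r" if "l r \<in> {0, 1}" for r
      using that lin[of r] by (auto simp: linepath_def)
    then show "(j \<circ> l) (min t s) = p (min t s) \<and> (j \<circ> l) (max t s) = p (max t s)"
      using l_ends by simp
  qed
  then show ?thesis
    unfolding path_homotopic_on_def by (rule homotopic_with_eq) (auto simp: lin)
qed

lemma path_homotopic_on_join:
  assumes "a \<le> b" "b \<le> c"
    and "path_homotopic_on X a b p q" "path_homotopic_on X b c p q"
  shows "path_homotopic_on X a c p q"
proof -
  obtain h where h: "continuous_map (top_of_set ({0..1::real} \<times> {a..b})) X h"
    "\<forall>x\<in>{a..b}. h (0, x) = p x" "\<forall>x\<in>{a..b}. h (1, x) = q x"
    "\<forall>v\<in>{0..1}. h (v, a) = p a \<and> h (v, b) = p b"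
    using assms(3) unfolding path_homotopic_on_iff[OF assms(1)] by blast
  obtain k where k: "continuous_map (top_of_set ({0..1::real} \<times> {b..c})) X k"
    "\<forall>x\<in>{b..c}. k (0, x) = p x" "\<forall>x\<in>{b..c}. k (1, x) = q x"
    "\<forall>v\<in>{0..1}. k (v, b) = p b \<and> k (v, c) = p c"
    using assms(4) unfolding path_homotopic_on_iff[OF assms(2)] by blast
  let ?T = "top_of_set ({0..1::real} \<times> {a..c})"
  have "continuous_map ?T X (\<lambda>x. if snd x \<le> b then h x else k x)"
  proof (rule continuous_map_cases_le)
    have "subtopology ?T {x \<in> topspace ?T. snd x \<le> b} = top_of_set ({0..1} \<times> {a..b})"
      "subtopology ?T {x \<in> topspace ?T. b \<le> snd x} = top_of_set ({0..1} \<times> {b..c})"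
      unfolding subtopology_subtopology using assms(1,2)
      by (auto intro!: arg_cong[where f = "subtopology euclidean"])
    then show "continuous_map (subtopology ?T {x \<in> topspace ?T. snd x \<le> b}) X h"
      "continuous_map (subtopology ?T {x \<in> topspace ?T. b \<le> snd x}) X k"
      using h(1) k(1) by simp_all
  qed (use h(4) k(4) in \<open>auto intro: continuous_on_snd continuous_on_id\<close>)
  with h k assms(1,2) show ?thesis
    unfolding path_homotopic_on_iff[OF order_trans[OF assms(1,2)]]
    by (intro exI[where x = "\<lambda>x. if snd x \<le> b then h x else k x"]) auto
qed

text \<open>The library's \<open>+++\<close> and \<open>reversepath\<close> require a
  \<open>topological_space\<close> target type, which an arbitrary \<open>'a topology\<close> does not provide.\<close>
definition join_reversed :: "(real \<Rightarrow> 'a) \<Rightarrow> (real \<Rightarrow> 'a) \<Rightarrow> real \<Rightarrow> 'a" where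
  "join_reversed f g u = (if u \<le> 1/2 then f (2 * u) else g (2 - 2 * u))"

lemma join_reversed_endpoints [simp]:
  "join_reversed f g 0 = f 0" "join_reversed f g 1 = g 0"
  by (simp_all add: join_reversed_def)

lemma join_reversed_image: "join_reversed f g ` {0..1} \<subseteq> f ` {0..1} \<union> g ` {0..1}"
  by (auto simp: join_reversed_def)

lemma pathin_join_reversed:
  assumes "pathin X f" "pathin X g" "f 1 = g 1"
  shows "pathin X (join_reversed f g)"
proof -
  let ?I = "top_of_set {0..1::real}"
  have "continuous_map ?I X (\<lambda>u. if u \<le> 1/2 then f (2 * u) else g (2 - 2 * u))"
  proof (rule continuous_map_cases_le)
    have "continuous_map (top_of_set {0..1/2}) ?I (\<lambda>u. 2 * u)"
      "continuous_map (top_of_set {1/2..1}) ?I (\<lambda>u. 2 - 2 * u)"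
      by (auto simp: continuous_map_in_subtopology intro!: continuous_intros)
    then have "continuous_map (top_of_set {0..1/2}) X (f \<circ> (\<lambda>u. 2 * u))"
      "continuous_map (top_of_set {1/2..1}) X (g \<circ> (\<lambda>u. 2 - 2 * u))"
      using assms(1,2) unfolding pathin_def by (metis continuous_map_compose)+
    moreover have "subtopology ?I {u \<in> topspace ?I. u \<le> 1/2} = top_of_set {0..1/2}"
      "subtopology ?I {u \<in> topspace ?I. 1/2 \<le> u} = top_of_set {1/2..1}"
      unfolding subtopology_subtopology by (auto intro!: arg_cong[where f = "subtopology euclidean"])
    ultimately show "continuous_map (subtopology ?I {u \<in> topspace ?I. u \<le> 1/2}) X (\<lambda>u. f (2 * u))"
      "continuous_map (subtopology ?I {u \<in> topspace ?I. 1/2 \<le> u}) X (\<lambda>u. g (2 - 2 * u))"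
      by (simp_all add: o_def)
  qed (use assms(3) in \<open>auto simp: mult.commute\<close>)
  then show ?thesis
    unfolding pathin_def join_reversed_def .
qed

lemma path_homotopic_on_if_trivial_join_reversed:
  assumes "f 0 = g 0" "f 1 = g 1" and "trivial_loop X (f 0) (join_reversed f g)"
  shows "path_homotopic_on X 0 1 f g"
proof -
  let ?Q = "{0..1::real} \<times> {0..1::real}"
  obtain H where H: "continuous_map (top_of_set ?Q) X H"
    "\<forall>x\<in>{0..1}. H (0, x) = join_reversed f g x" "\<forall>x\<in>{0..1}. H (1, x) = f 0"
    "\<forall>v\<in>{0..1}. H (v, 0) = f 0 \<and> H (v, 1) = f 0"
    using assms unfolding trivial_loop_def path_homotopic_on_iff[OF zero_le_one] by auto
  have H_sides: "H (x, y) = f 0" if "(x, y) \<in> ?Q" "y = 0 \<or> x = 1 \<or> y = 1" for x y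
    using that H(3,4) by auto
  \<comment> \<open>\<open>v \<mapsto> (b1 v, b2 v)\<close> runs along the three sides of the square on which \<open>H\<close> is
    constant; \<open>\<Phi>\<close> shrinks it linearly towards the midpoint \<open>(0, 1/2)\<close> of the side carrying the loop.\<close>
  define b1 :: "real \<Rightarrow> real" where "b1 v = min 1 (min (3 * v) (3 - 3 * v))" for v
  define b2 :: "real \<Rightarrow> real" where "b2 v = max 0 (min 1 (3 * v - 1))" for v
  define \<Phi> where "\<Phi> = (\<lambda>(v, r). ((1 - r) * b1 v, (1 - r) * b2 v + r / 2))"
  have b_01: "b1 v \<in> {0..1}" "b2 v \<in> {0..1}" if "v \<in> {0..1}" for v
    using that by (auto simp: b1_def b2_def)
  have \<Phi>_Q: "\<Phi> (v, r) \<in> ?Q" if "v \<in> {0..1}" "r \<in> {0..1}" for v r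
  proof -
    have "(1 - r) * b1 v \<le> 1" "(1 - r) * b2 v \<le> 1 - r"
      using that b_01[OF that(1)] by (auto intro: mult_le_one simp: mult_left_le)
    then show ?thesis
      using that b_01[OF that(1)] by (auto simp: \<Phi>_def)
  qed
  have "continuous_map (top_of_set ?Q) (top_of_set ?Q) \<Phi>"
    using \<Phi>_Q unfolding \<Phi>_def b1_def b2_def
    by (auto simp: continuous_map_in_subtopology case_prod_unfold intro!: continuous_intros)
  then have "continuous_map (top_of_set ?Q) X (H \<circ> \<Phi>)"
    using H(1) by (rule continuous_map_compose)
  moreover have "(H \<circ> \<Phi>) (0, r) = f r" if "r \<in> {0..1}" for r
    using that H(2) by (simp add: \<Phi>_def b1_def b2_def join_reversed_def)
  moreover have "(H \<circ> \<Phi>) (1, r) = g r" if "r \<in> {0..1}" for r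
  proof -
    have "(H \<circ> \<Phi>) (1, r) = join_reversed f g (1 - r / 2)"
      using that H(2) by (simp add: \<Phi>_def b1_def b2_def algebra_simps)
    then show ?thesis
      using that assms(2) by (cases "r = 1") (auto simp: join_reversed_def)
  qed
  moreover have "(H \<circ> \<Phi>) (v, 0) = f 0" if "v \<in> {0..1}" for v
  proof -
    have "b2 v = 0 \<or> b1 v = 1 \<or> b2 v = 1"
      by (auto simp: b1_def b2_def)
    then show ?thesis
      using H_sides[of "b1 v" "b2 v"] b_01[OF that] by (auto simp: \<Phi>_def)
  qed
  moreover have "(H \<circ> \<Phi>) (v, 1) = f 1" if "v \<in> {0..1}" for v
    using H(2) by (simp add: \<Phi>_def join_reversed_def)
  ultimately show ?thesis
    unfolding path_homotopic_on_iff[OF zero_le_one] by blast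
qed

lemma pathin_compose_linepath:
  assumes "pathin X p" "t \<in> {0..1}" "s \<in> {0..1}"
  shows "pathin X (p \<circ> linepath t s)"
proof (rule pathin_compose)
  have "closed_segment t s \<subseteq> {0..1}"
    using assms(2,3) by (simp add: closed_segment_subset)
  then show "pathin (top_of_set {0..1}) (linepath t s)"
    using path_image_linepath[of t s] by (auto simp: pathin_canon_iff path_image_def)
qed (use assms(1) in \<open>simp add: pathin_def\<close>)

lemma pathin_segment_image_subset_open:
  assumes "pathin X p" "openin X U" "t \<in> {0..1}" "p t \<in> U"
  obtains e where "e > 0" "\<And>s. s \<in> {0..1} \<Longrightarrow> \<bar>s - t\<bar> < e \<Longrightarrow> p ` closed_segment t s \<subseteq> U"
proof -
  have "openin (top_of_set {0..1}) {r \<in> {0..1::real}. p r \<in> U}"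
    using openin_continuous_map_preimage[OF assms(1)[unfolded pathin_def] assms(2)] by simp
  then obtain e where "e > 0" and e: "\<And>r. r \<in> {0..1} \<Longrightarrow> \<bar>r - t\<bar> < e \<Longrightarrow> p r \<in> U"
    using assms(3,4) unfolding openin_euclidean_subtopology_iff by (force simp: dist_real_def)
  show thesis
  proof (rule that[OF \<open>e > 0\<close>])
    fix s assume "s \<in> {0..1}" "\<bar>s - t\<bar> < e"
    moreover have "closed_segment t s \<subseteq> {0..1}"
      using assms(3) \<open>s \<in> {0..1}\<close> by (simp add: closed_segment_subset)
    ultimately show "p ` closed_segment t s \<subseteq> U"
      using e dist_in_closed_segment[of _ t s] by (force simp: dist_real_def)
  qed
qed

lemma trivial_detour_loops_near_non_aw:
  assumes p: "pathin X p" and q: "pathin X q" and "A \<subseteq> {0..1}" "\<forall>x\<in>A. p x = q x"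
    and "t \<in> A" "p t \<in> topspace X - aw X"
  shows "\<exists>d>0. \<forall>s\<in>A. s \<noteq> t \<and> \<bar>s - t\<bar> < d \<longrightarrow>
           trivial_loop X (p t) (join_reversed (p \<circ> linepath t s) (q \<circ> linepath t s))"
proof (rule ccontr)
  let ?L = "\<lambda>s. join_reversed (p \<circ> linepath t s) (q \<circ> linepath t s)"
  assume "\<not> ?thesis"
  then have "\<forall>n. \<exists>s\<in>A. s \<noteq> t \<and> \<bar>s - t\<bar> < inverse (Suc n) \<and> \<not> trivial_loop X (p t) (?L s)"
    by (metis inverse_positive_iff_positive of_nat_0_less_iff zero_less_Suc)
  then obtain \<sigma> where \<sigma>: "\<And>n. \<sigma> n \<in> A" "\<And>n. \<bar>\<sigma> n - t\<bar> < inverse (Suc n)"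
    "\<And>n. \<not> trivial_loop X (p t) (?L (\<sigma> n))"
    by metis
  have t01: "t \<in> {0..1}" and \<sigma>01: "\<And>n. \<sigma> n \<in> {0..1}"
    using assms(3,5) \<sigma>(1) by blast+
  have image_L: "?L s ` {0..1} \<subseteq> p ` closed_segment t s \<union> q ` closed_segment t s" for s
    using join_reversed_image[of "p \<circ> linepath t s" "q \<circ> linepath t s"]
    by (metis image_comp path_image_def path_image_linepath)
  have "p t \<in> aw X"
    unfolding aw_def
  proof (intro CollectI conjI exI[where x = "\<lambda>n. ?L (\<sigma> n)"] allI impI)
    fix n
    show "pathin X (?L (\<sigma> n))"
      using assms(4) \<sigma>(1) by (intro pathin_join_reversed pathin_compose_linepath p q t01 \<sigma>01)
        (simp add: linepath_1')
    show "?L (\<sigma> n) 0 = p t" "?L (\<sigma> n) 1 = p t"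
      using assms(4,5) by (simp_all add: linepath_def)
  next
    fix U assume U: "openin X U \<and> p t \<in> U"
    obtain e1 where "e1 > 0" and e1: "\<And>s. s \<in> {0..1} \<Longrightarrow> \<bar>s - t\<bar> < e1 \<Longrightarrow> p ` closed_segment t s \<subseteq> U"
      using pathin_segment_image_subset_open[OF p _ t01] U by blast
    obtain e2 where "e2 > 0" and e2: "\<And>s. s \<in> {0..1} \<Longrightarrow> \<bar>s - t\<bar> < e2 \<Longrightarrow> q ` closed_segment t s \<subseteq> U"
      using pathin_segment_image_subset_open[OF q, of U t] U t01 assms(4,5) by auto
    obtain N where N: "inverse (Suc N) < min e1 e2"
      using reals_Archimedean[of "min e1 e2"] \<open>e1 > 0\<close> \<open>e2 > 0\<close> by auto
    have "?L (\<sigma> n) ` {0..1} \<subseteq> U" if "N \<le> n" for n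
    proof -
      have "inverse (real (Suc n)) \<le> inverse (real (Suc N))"
        using that by (simp add: le_imp_inverse_le)
      then have "\<bar>\<sigma> n - t\<bar> < e1" "\<bar>\<sigma> n - t\<bar> < e2"
        using \<sigma>(2)[of n] N by linarith+
      then show ?thesis
        using image_L[of "\<sigma> n"] e1[OF \<sigma>01] e2[OF \<sigma>01] by blast
    qed
    then show "\<forall>\<^sub>F n in sequentially. ?L (\<sigma> n) ` {0..1} \<subseteq> U"
      unfolding eventually_sequentially by blast
  qed (use assms(6) \<sigma>(3) in auto)
  with assms(6) show False by blast
qed

lemma path_homotopic_on_near_non_aw:
  assumes "pathin X \<alpha>" "pathin X \<beta>" "A \<subseteq> {0..1}" "\<forall>x\<in>A. \<alpha> x = \<beta> x"
    and "t \<in> A" "\<alpha> t \<in> topspace X - aw X"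
  shows "\<exists>d>0. \<forall>s\<in>A. \<bar>s - t\<bar> < d \<longrightarrow> path_homotopic_on X (min t s) (max t s) \<alpha> \<beta>"
proof -
  obtain d where "d > 0" and d: "\<forall>s\<in>A. s \<noteq> t \<and> \<bar>s - t\<bar> < d \<longrightarrow>
      trivial_loop X (\<alpha> t) (join_reversed (\<alpha> \<circ> linepath t s) (\<beta> \<circ> linepath t s))"
    using trivial_detour_loops_near_non_aw[OF assms] by blast
  have "path_homotopic_on X (min t s) (max t s) \<alpha> \<beta>" if "s \<in> A" "\<bar>s - t\<bar> < d" for s
  proof (cases "s = t")
    case True
    then show ?thesis
      using assms(4-6) by (simp add: path_homotopic_on_point)
  next
    case False
    have "path_homotopic_on X 0 1 (\<alpha> \<circ> linepath t s) (\<beta> \<circ> linepath t s)"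
      using d that False assms(4,5)
      by (intro path_homotopic_on_if_trivial_join_reversed) (simp_all add: linepath_0' linepath_1')
    then show ?thesis
      using path_homotopic_on_linepath False by blast
  qed
  with \<open>d > 0\<close> show ?thesis by blast
qed

lemma open_interval_in_components:
  fixes A S :: "real set"
  assumes "x < y" "x \<in> A" "y \<in> A" "{x<..<y} \<subseteq> S - A"
  shows "{x<..<y} \<in> components (S - A)"
  unfolding in_components_maximal
proof (intro conjI allI impI)
  fix D assume D: "D \<noteq> {} \<and> {x<..<y} \<subseteq> D \<and> D \<subseteq> S - A \<and> connected D"
  have "(x + y) / 2 \<in> {x<..<y}"
    using assms(1) by simp
  with D have mid: "(x + y) / 2 \<in> D"
    by blast
  have "D \<subseteq> {x<..<y}"
  proof
    fix z assume "z \<in> D"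
    show "z \<in> {x<..<y}"
    proof (rule ccontr)
      assume "z \<notin> {x<..<y}"
      then have "x \<in> {z..(x + y) / 2} \<or> y \<in> {(x + y) / 2..z}"
        using assms(1) by auto
      then have "x \<in> D \<or> y \<in> D"
        using connected_contains_Icc[of D] D \<open>z \<in> D\<close> mid by blast
      then show False
        using D assms(2,3) by blast
    qed
  qed
  then show "D = {x<..<y}"
    using D by blast
qed (use assms in auto)

lemma closed_subset_interval_induct:
  fixes A :: "real set" and R :: "real \<Rightarrow> real \<Rightarrow> bool"
  assumes "closed A" "A \<subseteq> {a..b}" "a \<in> A" "b \<in> A"
    and trans: "\<And>x y z. x \<le> y \<Longrightarrow> y \<le> z \<Longrightarrow> R x y \<Longrightarrow> R y z \<Longrightarrow> R x z"
    and local: "\<And>t. t \<in> A \<Longrightarrow> \<exists>d>0. \<forall>s\<in>A. \<bar>s - t\<bar> < d \<longrightarrow> R (min t s) (max t s)"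
    and gap: "\<And>x y. x < y \<Longrightarrow> {x<..<y} \<in> components ({a..b} - A) \<Longrightarrow> R x y"
  shows "R a b"
proof -
  define S where "S = {s \<in> A. R a s}"
  define m where "m = Sup S"
  have "a \<in> S"
    using local[OF \<open>a \<in> A\<close>] \<open>a \<in> A\<close> by (auto simp: S_def)
  moreover have "bdd_above S"
    using assms(2) by (intro bdd_aboveI[where M = b]) (auto simp: S_def)
  ultimately have le_m: "s \<le> m" if "s \<in> S" for s
    using that by (simp add: m_def cSup_upper)
  have "m \<in> closure S"
    using \<open>a \<in> S\<close> \<open>bdd_above S\<close> unfolding m_def by (intro closure_contains_Sup) auto
  then have "m \<in> A"
    using closure_minimal[of S A] \<open>closed A\<close> by (auto simp: S_def)
  then obtain d where "d > 0" and d: "\<forall>s\<in>A. \<bar>s - m\<bar> < d \<longrightarrow> R (min m s) (max m s)"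
    using local by blast
  have "R a m"
  proof -
    obtain s where "s \<in> S" "m - d < s"
      using less_cSupE[of "m - d" S] \<open>a \<in> S\<close> \<open>d > 0\<close> by (auto simp: m_def)
    moreover have "a \<le> s" "s \<le> m" "s \<in> A" "R a s"
      using \<open>s \<in> S\<close> le_m assms(2) by (auto simp: S_def)
    moreover from calculation have "R s m"
      using d[rule_format, of s] by (simp add: abs_if min_absorb2 max_absorb1)
    ultimately show ?thesis
      using trans by blast
  qed
  have "\<not> m < b"
  proof
    assume "m < b"
    define n where "n = Inf (A \<inter> {m<..})"
    have "b \<in> A \<inter> {m<..}" "bdd_below (A \<inter> {m<..})"
      using \<open>b \<in> A\<close> \<open>m < b\<close> by auto
    then have "m \<le> n" "n \<in> closure (A \<inter> {m<..})"
      unfolding n_def by (auto intro: cInf_greatest closure_contains_Inf)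
    then have "n \<in> A"
      using closure_mono[of "A \<inter> {m<..}" A] \<open>closed A\<close> by auto
    have "\<exists>s\<in>A. m < s \<and> R m s"
    proof (cases "n = m")
      case True
      then obtain s where "s \<in> A \<inter> {m<..}" "s < m + d"
        using cInf_lessD[of "A \<inter> {m<..}" "m + d"] \<open>b \<in> A \<inter> {m<..}\<close> \<open>d > 0\<close>
        by (auto simp: n_def)
      then show ?thesis
        using d[rule_format, of s] by (auto simp: abs_if min_absorb1 max_absorb2)
    next
      case False
      have "A \<inter> {m<..<n} = {}"
        using cInf_lower[OF _ \<open>bdd_below (A \<inter> {m<..})\<close>] by (force simp: n_def)
      moreover have "{m<..<n} \<subseteq> {a..b}"
        using \<open>m \<in> A\<close> \<open>n \<in> A\<close> assms(2) by fastforce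
      ultimately have "R m n"
        using False \<open>m \<le> n\<close> \<open>m \<in> A\<close> \<open>n \<in> A\<close>
        by (intro gap open_interval_in_components) auto
      with False \<open>m \<le> n\<close> \<open>n \<in> A\<close> show ?thesis
        by (intro bexI[of _ n]) auto
    qed
    then obtain s where "s \<in> A" "m < s" "R m s"
      by blast
    moreover have "a \<le> m"
      using le_m \<open>a \<in> S\<close> by blast
    ultimately have "s \<in> S"
      using trans[of a m s] \<open>R a m\<close> by (auto simp: S_def)
    then show False
      using le_m \<open>m < s\<close> by force
  qed
  moreover have "m \<le> b"
    using \<open>m \<in> A\<close> assms(2) by auto
  ultimately show ?thesis
    using \<open>R a m\<close> by simp
qed

theorem mainTheorem11:
  fixes X :: "'a topology" and \<alpha> \<beta> :: "real \<Rightarrow> 'a" and A :: "real set"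
  assumes "pathin X \<alpha>" and "pathin X \<beta>"
    and "homotopy_cut_set X 0 1 \<alpha> \<beta> A"
    and "\<alpha> ` A \<subseteq> topspace X - aw X"
  shows "path_homotopic_on X 0 1 \<alpha> \<beta>"
proof -
  have A: "closed A" "A \<subseteq> {0..1}" "0 \<in> A" "1 \<in> A" "\<forall>x\<in>A. \<alpha> x = \<beta> x"
    and gaps: "\<And>x y. x < y \<Longrightarrow> {x<..<y} \<in> components ({0..1} - A) \<Longrightarrow> path_homotopic_on X x y \<alpha> \<beta>"
    using assms(3) unfolding homotopy_cut_set_def by blast+
  show ?thesis
  proof (rule closed_subset_interval_induct[OF A(1-4)])
    show "\<exists>d>0. \<forall>s\<in>A. \<bar>s - t\<bar> < d \<longrightarrow> path_homotopic_on X (min t s) (max t s) \<alpha> \<beta>" if "t \<in> A" for t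
      using that assms(1,2,4) A(2,5) by (intro path_homotopic_on_near_non_aw) auto
  qed (use path_homotopic_on_join gaps in auto)
qed

end
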